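(* Let $d\ge2$, $n\ge2$, and consider $n$ agents with positions $p_i(t)\in\mathbb R^d$ and dynamics $\dot p_i=v_i$. Let $\mathcal G=(\mathcal V,\mathcal E)$ be an undirected graph on $\mathcal V=\{1,\dots,n\}$ with neighbor sets $\mathcal N_i$, and assume: (A1) $\mathcal G$ has a spanning tree and each agent $i$ measures the bearings $g_{ij}=p_{ij}/\|p_{ij}\|$, $p_{ij}=p_j-p_i$, to its neighbors $j\in\mathcal N_i$; (A2) the desired positions $p_i^*(t)$ satisfy $\dot p_i^*=v_i^*$ with desired velocities $v_i^*(t)$ bounded and known, the desired bearings $g^*_{ij}(t)=p^*_{ij}/\|p^*_{ij}\|$, $p^*_{ij}=p^*_j-p^*_i$, are well defined, and the desired formation $\mathcal G(p^*(t))$ is bearing persistently exciting for all $t\ge0$; (A3) there exists $\epsilon>0$ such that $\|p_{ij}(t)\|>\epsilon$ for all $t\ge0$ and all $\{i,j\}\in\mathcal E$. Let $k_p>0$ and apply the control law $v_i=-k_p\sum_{j\in\mathcal N_i}\pi_{g_{ij}}p^*_{ij}+v_i^*$ for each $i$. Let $\tilde p=p-p^*\in\mathbb R^{dn}$ and $U=1_n\otimes I_d$. Then the equilibrium point $\tilde p=\frac1nUU^\top\tilde p(0)$ of the resulting closed-loop error dynamics is exponentially stable.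
   Context: For $y\in\mathbb S^{d-1}$, $\pi_y=I_d-yy^\top$. Given an arbitrary orientation of $\mathcal G$ with incidence matrix $H\in\mathbb R^{m\times n}$ ($[H]_{ki}=1$ if $i$ is the head of edge $k$, $-1$ if the tail, 0 otherwise), set $\bar H=H\otimes I_d$, $e=\bar Hp$, $g_k=e_k/\|e_k\|$, $\Pi=\mathrm{blkdiag}(\pi_{g_k})$, $L=\bar H^\top\bar H$ and bearing Laplacian $L_B=\bar H^\top\Pi\bar H$ (and analogously for $p^*$). $L_B(p^*(t))$ is PE if there exist $T,\mu>0$ with $\int_t^{t+T}L_B(p^*(\tau))d\tau\ge\mu L$ for all $t$; the formation $\mathcal G(p^*(t))$ is bearing persistently exciting if $\mathcal G$ has a spanning tree and its bearing Laplacian is PE. *)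

theory Defs
  imports "HOL-Analysis.Analysis"
begin

text \<open>Agents are indexed by a finite type 'n (n = CARD('n)), positions live in
  real^'d (d = CARD('d)); a stacked configuration p in R^{dn} is an element of
  real^'d^'n with block p $ i = p_i.\<close>

definition undirected_graph :: "('n \<times> 'n) set \<Rightarrow> bool" where
  "undirected_graph E \<longleftrightarrow> sym E \<and> (\<forall>i. (i, i) \<notin> E)"

definition nbrs :: "('n \<times> 'n) set \<Rightarrow> 'n \<Rightarrow> 'n set" where
  "nbrs E i = {j. (i, j) \<in> E}"

text \<open>Spanning tree: a subgraph T of E on all vertices that is connected and has
  n - 1 undirected edges (i.e. 2(n-1) ordered pairs).\<close>
definition has_spanning_tree :: "('n::finite \<times> 'n) set \<Rightarrow> bool" where
  "has_spanning_tree E \<longleftrightarrow>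
     (\<exists>T. T \<subseteq> E \<and> undirected_graph T \<and> (\<forall>i j. (i, j) \<in> T\<^sup>*) \<and>
          card T = 2 * (CARD('n) - 1))"

definition proj_perp :: "real^'d \<Rightarrow> real^'d \<Rightarrow> real^'d" where
  "proj_perp y z = z - (y \<bullet> z) *\<^sub>R y"

definition relpos :: "real^'d^'n \<Rightarrow> 'n \<Rightarrow> 'n \<Rightarrow> real^'d" where
  "relpos p i j = p $ j - p $ i"

definition bearing :: "real^'d^'n \<Rightarrow> 'n \<Rightarrow> 'n \<Rightarrow> real^'d" where
  "bearing p i j = (1 / norm (relpos p i j)) *\<^sub>R relpos p i j"

text \<open>Bearing Laplacian L_B(p) = Hbar^T Pi Hbar and Laplacian L = Hbar^T Hbar as
  linear operators on R^{dn}:  (L_B(p) x)_i = sum_{j in N_i} pi_{g_ij} (x_i - x_j),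
  which is independent of the chosen orientation.\<close>
definition bearing_laplacian :: "('n::finite \<times> 'n) set \<Rightarrow> real^'d^'n \<Rightarrow> real^'d^'n \<Rightarrow> real^'d^'n" where
  "bearing_laplacian E p x = (\<chi> i. \<Sum>j\<in>nbrs E i. proj_perp (bearing p i j) (x $ i - x $ j))"

definition graph_laplacian :: "('n::finite \<times> 'n) set \<Rightarrow> real^'d^'n \<Rightarrow> real^'d^'n" where
  "graph_laplacian E x = (\<chi> i. \<Sum>j\<in>nbrs E i. x $ i - x $ j)"

text \<open>Persistent excitation: exists T, mu > 0 with
  int_t^{t+T} L_B(p*(tau)) dtau >= mu L (Loewner order) for all t >= 0,
  the matrix inequality written via quadratic forms.\<close>
definition bearing_laplacian_PE :: "('n::finite \<times> 'n) set \<Rightarrow> (real \<Rightarrow> real^'d^'n) \<Rightarrow> bool" where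
  "bearing_laplacian_PE E ps \<longleftrightarrow>
     (\<exists>T \<mu>. T > 0 \<and> \<mu> > 0 \<and>
        (\<forall>t\<ge>0. \<forall>x. integral {t..t+T} (\<lambda>\<tau>. x \<bullet> bearing_laplacian E (ps \<tau>) x)
                      \<ge> \<mu> * (x \<bullet> graph_laplacian E x)))"

definition bearing_PE_formation :: "('n::finite \<times> 'n) set \<Rightarrow> (real \<Rightarrow> real^'d^'n) \<Rightarrow> bool" where
  "bearing_PE_formation E ps \<longleftrightarrow> has_spanning_tree E \<and> bearing_laplacian_PE E ps"

definition control_law ::
  "('n::finite \<times> 'n) set \<Rightarrow> real \<Rightarrow> real^'d^'n \<Rightarrow> real^'d^'n \<Rightarrow> real^'d^'n \<Rightarrow> real^'d^'n" where
  "control_law E kp ps vs p =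
     (\<chi> i. - kp *\<^sub>R (\<Sum>j\<in>nbrs E i. proj_perp (bearing p i j) (relpos ps i j)) + vs $ i)"

text \<open>(1/n) U U^T x with U = 1_n (x) I_d: every block equals the average of blocks.\<close>
definition centroid_proj :: "real^'d^'n::finite \<Rightarrow> real^'d^'n" where
  "centroid_proj x = (\<chi> i. (1 / real CARD('n)) *\<^sub>R (\<Sum>j\<in>UNIV. x $ j))"

text \<open>Closed-loop solution on [t0, oo) satisfying (A3) with constant eps.\<close>
definition closed_loop_solution ::
  "('n::finite \<times> 'n) set \<Rightarrow> real \<Rightarrow> (real \<Rightarrow> real^'d^'n) \<Rightarrow> (real \<Rightarrow> real^'d^'n)
     \<Rightarrow> real \<Rightarrow> real \<Rightarrow> (real \<Rightarrow> real^'d^'n) \<Rightarrow> bool" where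
  "closed_loop_solution E kp ps vs eps t0 p \<longleftrightarrow>
     (\<forall>t\<ge>t0. (p has_vector_derivative control_law E kp (ps t) (vs t) (p t)) (at t within {t0..})) \<and>
     (\<forall>t\<ge>t0. \<forall>i j. (i, j) \<in> E \<longrightarrow> norm (relpos (p t) i j) > eps)"

text \<open>(Uniform, local) exponential stability of the equilibrium
  ptilde = (1/n) U U^T ptilde(t0) of the closed-loop error dynamics,
  ptilde = p - p*.\<close>
definition error_equilibrium_exp_stable ::
  "('n::finite \<times> 'n) set \<Rightarrow> real \<Rightarrow> (real \<Rightarrow> real^'d^'n) \<Rightarrow> (real \<Rightarrow> real^'d^'n) \<Rightarrow> real \<Rightarrow> bool" where
  "error_equilibrium_exp_stable E kp ps vs eps \<longleftrightarrow>
     (\<exists>c lam r. c > 0 \<and> lam > 0 \<and> r > 0 \<and>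
       (\<forall>t0\<ge>0. \<forall>p. closed_loop_solution E kp ps vs eps t0 p \<longrightarrow>
          (let pt = (\<lambda>t. p t - ps t); pe = centroid_proj (pt t0) in
             norm (pt t0 - pe) < r \<longrightarrow>
             (\<forall>t\<ge>t0. norm (pt t - pe) \<le> c * norm (pt t0 - pe) * exp (- lam * (t - t0))))))"

end

theory Submission
  imports Defs
begin

text \<open>
  Let e = p - p* - c, where the translation c is the centroid of the initial error
  p(t0) - p*(t0). Since \<pi>_{g_ij} annihilates p_ij, the closed loop reads
  e' = -k_p L_B(p) e, so V = |e|^2 is nonincreasing with V' = -k_p W, where W is the sum
  over the edges of |\<pi>_{g_ij} (e_i - e_j)|^2, and e keeps zero sum.
  On a window [t, t + T] of persistent excitation, either V drops by a fixed fraction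
  \<eta>, or little energy is dissipated. In the latter case e stays close to e(t) on the
  window, and as |e| <= |e(t0)| is small compared with the lower bound eps on the
  inter-agent distances, the bearings of p stay close to those of p*. The excitation
  integral of L_B(p*) at e(t), which by connectivity is at least a multiple of |e(t)|^2,
  is then dominated by the dissipated energy: a contradiction. Iterating over
  consecutive windows gives exponential decay.
\<close>

section \<open>Orthogonal projections and bearings\<close>

lemma proj_perp_add: "proj_perp g (a + b) = proj_perp g a + proj_perp g b"
  by (simp add: proj_perp_def inner_add_right algebra_simps)

lemma proj_perp_diff: "proj_perp g (a - b) = proj_perp g a - proj_perp g b"
  by (simp add: proj_perp_def inner_diff_right algebra_simps)

lemma proj_perp_minus: "proj_perp g (- a) = - proj_perp g a"
  by (simp add: proj_perp_def)

lemma proj_perp_uminus_dir: "proj_perp (- g) a = proj_perp g a"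
  by (simp add: proj_perp_def)

lemma proj_perp_normalize_self: "proj_perp ((1 / norm a) *\<^sub>R a) a = 0"
  by (cases "a = 0")
     (simp_all add: proj_perp_def inner_commute power2_norm_eq_inner[symmetric] power2_eq_square)

lemma norm_proj_perp_sq:
  "(norm (proj_perp g y))\<^sup>2 = y \<bullet> y - 2 * (g \<bullet> y)\<^sup>2 + (g \<bullet> y)\<^sup>2 * (g \<bullet> g)"
  unfolding proj_perp_def power2_norm_eq_inner
  by (simp only: inner_diff_left inner_diff_right inner_scaleR_left inner_scaleR_right
      inner_commute[of g y]) (simp add: power2_eq_square algebra_simps)

lemma inner_proj_perp_self:
  assumes "norm g = 1 \<or> g = 0"
  shows "y \<bullet> proj_perp g y = (norm (proj_perp g y))\<^sup>2"
proof -
  have "g \<bullet> g = 1 \<or> g = 0" using assms by (metis norm_eq_1)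
  moreover have "y \<bullet> proj_perp g y = y \<bullet> y - (g \<bullet> y)\<^sup>2"
    by (simp add: proj_perp_def inner_diff_right inner_commute power2_eq_square)
  ultimately show ?thesis unfolding norm_proj_perp_sq by auto
qed

lemma norm_proj_perp_le:
  assumes "norm g \<le> 1"
  shows "norm (proj_perp g y) \<le> norm y"
proof (rule power2_le_imp_le)
  have "g \<bullet> g \<le> 1"
    using assms by (simp add: power2_norm_eq_inner[symmetric] power_le_one)
  then have "(g \<bullet> y)\<^sup>2 * (g \<bullet> g) \<le> (g \<bullet> y)\<^sup>2" by (simp add: mult_left_le)
  then show "(norm (proj_perp g y))\<^sup>2 \<le> (norm y)\<^sup>2"
    unfolding norm_proj_perp_sq power2_norm_eq_inner[of y]
    using zero_le_power2[of "g \<bullet> y"] by linarith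
qed simp

lemma norm_proj_perp_diff_dir_le:
  assumes "norm g \<le> 1" "norm w \<le> 1"
  shows "norm (proj_perp g y - proj_perp w y) \<le> 2 * norm (g - w) * norm y"
proof -
  have "proj_perp g y - proj_perp w y = - ((g \<bullet> y) *\<^sub>R (g - w) + ((g - w) \<bullet> y) *\<^sub>R w)"
    by (simp add: proj_perp_def algebra_simps inner_diff_left)
  then have "norm (proj_perp g y - proj_perp w y)
      \<le> norm ((g \<bullet> y) *\<^sub>R (g - w)) + norm (((g - w) \<bullet> y) *\<^sub>R w)"
    by (metis norm_minus_cancel norm_triangle_ineq)
  also have "\<dots> \<le> norm g * norm y * norm (g - w) + norm (g - w) * norm y * norm w"
    by (intro add_mono) (simp_all add: Cauchy_Schwarz_ineq2 mult_right_mono mult_left_mono)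
  also have "\<dots> \<le> 1 * norm y * norm (g - w) + norm (g - w) * norm y * 1"
    using assms by (intro add_mono mult_right_mono mult_left_mono) auto
  finally show ?thesis by (simp add: algebra_simps)
qed

lemma norm_proj_perp_perturb_le:
  assumes "norm g \<le> 1" "norm w \<le> 1"
  shows "norm (proj_perp w y) \<le> norm (proj_perp g z) + norm (y - z) + 2 * norm (g - w) * norm y"
proof -
  have "norm (proj_perp w y) \<le> norm (proj_perp g y) + norm (proj_perp g y - proj_perp w y)"
    using norm_triangle_sub[of "proj_perp w y" "proj_perp g y"] by (simp add: norm_minus_commute)
  moreover have "norm (proj_perp g y) \<le> norm (proj_perp g z) + norm (y - z)"
  proof -
    have "proj_perp g y = proj_perp g z + proj_perp g (y - z)"
      by (simp add: proj_perp_add[symmetric])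
    then show ?thesis
      using norm_triangle_ineq[of "proj_perp g z" "proj_perp g (y - z)"]
        norm_proj_perp_le[OF assms(1), of "y - z"] by simp
  qed
  ultimately show ?thesis using norm_proj_perp_diff_dir_le[OF assms, of y] by simp
qed

lemma norm_normalize_diff_le:
  fixes a b :: "'a::real_normed_vector"
  assumes "a \<noteq> 0"
  shows "norm ((1 / norm a) *\<^sub>R a - (1 / norm b) *\<^sub>R b) \<le> 2 * norm (a - b) / norm a"
proof (cases "b = 0")
  case True
  then show ?thesis using assms by simp
next
  case False
  have a: "norm a > 0" using assms by simp
  have "(1 / norm a) *\<^sub>R a - (1 / norm b) *\<^sub>R b
      = (1 / norm a) *\<^sub>R (a - b) + (1 / norm a - 1 / norm b) *\<^sub>R b"
    by (simp add: algebra_simps)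
  then have "norm ((1 / norm a) *\<^sub>R a - (1 / norm b) *\<^sub>R b)
      \<le> norm (a - b) / norm a + \<bar>1 / norm a - 1 / norm b\<bar> * norm b"
    using norm_triangle_ineq[of "(1 / norm a) *\<^sub>R (a - b)" "(1 / norm a - 1 / norm b) *\<^sub>R b"]
    by simp
  also have "\<bar>1 / norm a - 1 / norm b\<bar> * norm b = \<bar>norm b - norm a\<bar> / norm a"
    using a False by (simp add: field_simps abs_div abs_mult)
  also have "\<bar>norm b - norm a\<bar> \<le> norm (a - b)"
    by (metis norm_minus_commute norm_triangle_ineq3)
  finally show ?thesis using a by (simp add: divide_right_mono add_divide_distrib[symmetric])
qed

lemma norm_bearing_cases: "norm (bearing p i j) = 1 \<or> bearing p i j = 0"
  by (cases "relpos p i j = 0") (auto simp: bearing_def)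

lemma norm_bearing_le: "norm (bearing p i j) \<le> 1"
  using norm_bearing_cases[of p i j] by auto

lemma bearing_swap: "bearing p j i = - bearing p i j"
proof -
  have "relpos p j i = - relpos p i j" by (simp add: relpos_def)
  then show ?thesis by (simp add: bearing_def)
qed

lemma proj_perp_bearing_relpos: "proj_perp (bearing p i j) (relpos p i j) = 0"
  unfolding bearing_def by (rule proj_perp_normalize_self)

lemma proj_perp_bearing_swap:
  "proj_perp (bearing p j i) (- y) = - proj_perp (bearing p i j) y"
  by (simp only: bearing_swap[of p i j] proj_perp_uminus_dir proj_perp_minus)

lemma norm_bearing_diff_le:
  assumes "eps < norm (relpos q i j)" "0 < eps"
  shows "norm (bearing q i j - bearing s i j) \<le> 2 * norm (relpos q i j - relpos s i j) / eps"
proof -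
  have "relpos q i j \<noteq> 0" using assms by auto
  then have "norm (bearing q i j - bearing s i j)
      \<le> 2 * norm (relpos q i j - relpos s i j) / norm (relpos q i j)"
    unfolding bearing_def by (rule norm_normalize_diff_le)
  also have "\<dots> \<le> 2 * norm (relpos q i j - relpos s i j) / eps"
    using assms by (intro divide_left_mono mult_pos_pos) auto
  finally show ?thesis .
qed

section \<open>Sums over edges and Laplacian quadratic forms\<close>

lemma sum_nbrs_eq_sum_edges:
  fixes E :: "('n::finite \<times> 'n) set"
  shows "(\<Sum>i\<in>UNIV. \<Sum>j\<in>nbrs E i. f i j) = (\<Sum>(i, j)\<in>E. f i j)"
proof -
  have "Sigma UNIV (nbrs E) = E" by (auto simp: nbrs_def)
  then show ?thesis by (simp add: sum.Sigma)
qed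

lemma sum_edges_swap:
  assumes "sym E"
  shows "(\<Sum>(i, j)\<in>E. f i j) = (\<Sum>(i, j)\<in>E. f j i)"
proof -
  have "prod.swap ` E = E"
    using assms unfolding sym_def by (auto simp: image_iff) (metis swap_simp)
  then show ?thesis
    using sum.reindex[of prod.swap E "\<lambda>(i, j). f i j"] by (simp add: case_prod_beta)
qed

lemma sum_nbrs_antisym_eq_0:
  fixes \<Phi> :: "'n::finite \<Rightarrow> 'n \<Rightarrow> 'a::real_vector"
  assumes "sym E" and antisym: "\<And>i j. \<Phi> j i = - \<Phi> i j"
  shows "(\<Sum>i\<in>UNIV. \<Sum>j\<in>nbrs E i. \<Phi> i j) = 0"
proof -
  have "(\<Sum>(i, j)\<in>E. \<Phi> i j) = (\<Sum>(i, j)\<in>E. \<Phi> j i)"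
    by (rule sum_edges_swap[OF assms(1)])
  also have "\<dots> = (\<Sum>(i, j)\<in>E. - \<Phi> i j)"
    by (rule sum.cong) (auto intro: antisym)
  finally have "(2::real) *\<^sub>R (\<Sum>(i, j)\<in>E. \<Phi> i j) = 0"
    by (simp add: scaleR_2 eq_neg_iff_add_eq_0 case_prod_beta sum_negf)
  then show ?thesis by (simp add: sum_nbrs_eq_sum_edges)
qed

lemma inner_sum_nbrs_odd:
  fixes x :: "'a::real_inner^'n::finite" and \<Phi> :: "'n \<Rightarrow> 'n \<Rightarrow> 'a \<Rightarrow> 'a"
  assumes "sym E" and odd: "\<And>i j y. \<Phi> j i (- y) = - \<Phi> i j y"
  shows "(\<Sum>i\<in>UNIV. x$i \<bullet> (\<Sum>j\<in>nbrs E i. \<Phi> i j (x$i - x$j))) =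
         (\<Sum>(i, j)\<in>E. (x$i - x$j) \<bullet> \<Phi> i j (x$i - x$j)) / 2"
proof -
  define h where "h i j = x$i \<bullet> \<Phi> i j (x$i - x$j)" for i j
  have "h i j + h j i = (x$i - x$j) \<bullet> \<Phi> i j (x$i - x$j)" for i j
    using odd[of j i "x$i - x$j"] by (simp add: h_def inner_diff_left)
  then have "(\<Sum>(i, j)\<in>E. h i j) + (\<Sum>(i, j)\<in>E. h j i)
      = (\<Sum>(i, j)\<in>E. (x$i - x$j) \<bullet> \<Phi> i j (x$i - x$j))"
    by (simp add: sum.distrib[symmetric] case_prod_beta)
  moreover have "(\<Sum>i\<in>UNIV. x$i \<bullet> (\<Sum>j\<in>nbrs E i. \<Phi> i j (x$i - x$j))) = (\<Sum>(i, j)\<in>E. h i j)"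
    by (simp add: inner_sum_right sum_nbrs_eq_sum_edges h_def)
  ultimately show ?thesis using sum_edges_swap[OF assms(1), of h] by simp
qed

definition bearing_energy :: "('n::finite \<times> 'n) set \<Rightarrow> real^'d^'n \<Rightarrow> real^'d^'n \<Rightarrow> real" where
  "bearing_energy E p x = (\<Sum>(i, j)\<in>E. (norm (proj_perp (bearing p i j) (x$i - x$j)))\<^sup>2)"

definition edge_energy :: "('n::finite \<times> 'n) set \<Rightarrow> real^'d^'n \<Rightarrow> real" where
  "edge_energy E x = (\<Sum>(i, j)\<in>E. (norm (x$i - x$j))\<^sup>2)"

lemma bearing_energy_nonneg: "0 \<le> bearing_energy E p x"
  unfolding bearing_energy_def by (intro sum_nonneg) auto

lemma edge_energy_nonneg: "0 \<le> edge_energy E x"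
  unfolding edge_energy_def by (intro sum_nonneg) auto

lemma edge_energy_ge: "(i, j) \<in> E \<Longrightarrow> (norm (x$i - x$j))\<^sup>2 \<le> edge_energy E x"
  unfolding edge_energy_def
  using member_le_sum[of "(i, j)" E "\<lambda>(i, j). (norm (x$i - x$j))\<^sup>2"] by auto

lemma inner_bearing_laplacian:
  assumes "sym E"
  shows "x \<bullet> bearing_laplacian E p x = bearing_energy E p x / 2"
proof -
  have "x \<bullet> bearing_laplacian E p x
      = (\<Sum>i\<in>UNIV. x$i \<bullet> (\<Sum>j\<in>nbrs E i. proj_perp (bearing p i j) (x$i - x$j)))"
    by (simp add: bearing_laplacian_def inner_vec_def)
  also have "\<dots> = (\<Sum>(i, j)\<in>E. (x$i - x$j) \<bullet> proj_perp (bearing p i j) (x$i - x$j)) / 2"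
    by (rule inner_sum_nbrs_odd[OF assms]) (rule proj_perp_bearing_swap)
  also have "\<dots> = bearing_energy E p x / 2"
    by (simp add: bearing_energy_def inner_proj_perp_self[OF norm_bearing_cases] case_prod_beta)
  finally show ?thesis .
qed

lemma inner_graph_laplacian:
  assumes "sym E"
  shows "x \<bullet> graph_laplacian E x = edge_energy E x / 2"
proof -
  have "x \<bullet> graph_laplacian E x = (\<Sum>i\<in>UNIV. x$i \<bullet> (\<Sum>j\<in>nbrs E i. id (x$i - x$j)))"
    by (simp add: graph_laplacian_def inner_vec_def)
  also have "\<dots> = (\<Sum>(i, j)\<in>E. (x$i - x$j) \<bullet> id (x$i - x$j)) / 2"
    by (rule inner_sum_nbrs_odd[OF assms]) simp
  also have "\<dots> = edge_energy E x / 2"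
    by (simp add: edge_energy_def case_prod_beta power2_norm_eq_inner)
  finally show ?thesis .
qed

lemma sum_bearing_laplacian_eq_0:
  assumes "sym E"
  shows "(\<Sum>i\<in>UNIV. bearing_laplacian E p x $ i) = 0"
  unfolding bearing_laplacian_def vec_lambda_beta
  by (rule sum_nbrs_antisym_eq_0[OF assms]) (metis minus_diff_eq proj_perp_bearing_swap)

lemma norm_bearing_laplacian_le:
  "norm (bearing_laplacian E p x) \<le> (\<Sum>(i, j)\<in>E. norm (proj_perp (bearing p i j) (x$i - x$j)))"
proof -
  have "norm (bearing_laplacian E p x) \<le> (\<Sum>i\<in>UNIV. norm (bearing_laplacian E p x $ i))"
    unfolding norm_vec_def by (rule L2_set_le_sum) simp
  also have "\<dots> \<le> (\<Sum>i\<in>UNIV. \<Sum>j\<in>nbrs E i. norm (proj_perp (bearing p i j) (x$i - x$j)))"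
    unfolding bearing_laplacian_def vec_lambda_beta by (intro sum_mono norm_sum)
  finally show ?thesis by (simp only: sum_nbrs_eq_sum_edges)
qed

lemma norm_bearing_laplacian_le_energy:
  assumes "0 < \<beta>"
  shows "norm (bearing_laplacian E p x) \<le> bearing_energy E p x / (2 * \<beta>) + real (card E) * \<beta> / 2"
proof -
  have am_gm: "u \<le> u\<^sup>2 / (2 * \<beta>) + \<beta> / 2" for u :: real
  proof -
    have "2 * \<beta> * u \<le> u\<^sup>2 + \<beta>\<^sup>2"
      using zero_le_power2[of "u - \<beta>"] by (simp add: power2_eq_square algebra_simps)
    then show ?thesis using assms by (simp add: field_simps power2_eq_square)
  qed
  have "norm (bearing_laplacian E p x)
      \<le> (\<Sum>(i, j)\<in>E. (norm (proj_perp (bearing p i j) (x$i - x$j)))\<^sup>2 / (2 * \<beta>) + \<beta> / 2)"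
    using norm_bearing_laplacian_le by (rule order_trans) (auto intro: sum_mono simp: am_gm)
  also have "\<dots> = bearing_energy E p x / (2 * \<beta>) + real (card E) * \<beta> / 2"
    by (simp add: bearing_energy_def sum.distrib sum_divide_distrib case_prod_beta)
  finally show ?thesis .
qed

section \<open>Connectivity and persistent excitation\<close>

lemma has_spanning_tree_imp_connected: "has_spanning_tree E \<Longrightarrow> (i, j) \<in> E\<^sup>*"
  unfolding has_spanning_tree_def by (meson rtrancl_mono subsetD)

lemma norm_diff_sq_le_edge_energy:
  fixes E :: "('n::finite \<times> 'n) set"
  assumes "(i, j) \<in> E\<^sup>*"
  shows "\<exists>K\<ge>0. \<forall>x::real^'d^'n. (norm (x$i - x$j))\<^sup>2 \<le> K * edge_energy E x"
  using assms
proof (induction rule: rtrancl_induct)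
  case base
  then show ?case by (intro exI[of _ 0]) (simp add: edge_energy_nonneg)
next
  case (step k j)
  from step.IH obtain K where K: "K \<ge> 0"
    and ik: "\<And>x::real^'d^'n. (norm (x$i - x$k))\<^sup>2 \<le> K * edge_energy E x" by auto
  show ?case
  proof (intro exI[of _ "2 * K + 2"] conjI allI)
    fix x :: "real^'d^'n"
    have "norm (x$i - x$j) \<le> norm (x$i - x$k) + norm (x$k - x$j)"
      using norm_triangle_ineq[of "x$i - x$k" "x$k - x$j"] by simp
    then have "(norm (x$i - x$j))\<^sup>2 \<le> 2 * (norm (x$i - x$k))\<^sup>2 + 2 * (norm (x$k - x$j))\<^sup>2"
      by (smt (verit) norm_ge_zero power_mono power2_sum zero_le_power2 power2_diff)
    also have "\<dots> \<le> 2 * (K * edge_energy E x) + 2 * edge_energy E x"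
      using ik[of x] edge_energy_ge[OF step.hyps(2), of x] by simp
    finally show "(norm (x$i - x$j))\<^sup>2 \<le> (2 * K + 2) * edge_energy E x"
      by (simp add: algebra_simps)
  qed (use K in simp)
qed

lemma connected_diff_sq_le_edge_energy:
  fixes E :: "('n::finite \<times> 'n) set"
  assumes "\<And>i j. (i, j) \<in> E\<^sup>*"
  obtains K where "0 \<le> K" "\<And>(x::real^'d^'n) i j. (norm (x$i - x$j))\<^sup>2 \<le> K * edge_energy E x"
proof -
  have "\<forall>ij. \<exists>K\<ge>0. \<forall>x::real^'d^'n. (norm (x$fst ij - x$snd ij))\<^sup>2 \<le> K * edge_energy E x"
    using norm_diff_sq_le_edge_energy[OF assms] by blast
  then obtain Kf where Kf: "\<And>ij. 0 \<le> Kf ij"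
    "\<And>ij (x::real^'d^'n). (norm (x$fst ij - x$snd ij))\<^sup>2 \<le> Kf ij * edge_energy E x"
    by metis
  show ?thesis
  proof (rule that[of "\<Sum>ij\<in>UNIV. Kf ij"])
    show "0 \<le> (\<Sum>ij\<in>UNIV. Kf ij)" by (simp add: sum_nonneg Kf)
    fix x :: "real^'d^'n" and i j
    have "Kf (i, j) \<le> (\<Sum>ij\<in>UNIV. Kf ij)" by (rule member_le_sum) (auto simp: Kf)
    then show "(norm (x$i - x$j))\<^sup>2 \<le> (\<Sum>ij\<in>UNIV. Kf ij) * edge_energy E x"
      using Kf(2)[where ij="(i, j)" and x=x]
      by (smt (verit) edge_energy_nonneg mult_right_mono fst_conv snd_conv)
  qed
qed

lemma norm_nth_le_of_sum_eq_0:
  fixes x :: "'a::real_normed_vector^'n::finite"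
  assumes "(\<Sum>i\<in>UNIV. x$i) = 0" "\<And>j. norm (x$i - x$j) \<le> c"
  shows "norm (x$i) \<le> c"
proof -
  have "real CARD('n) *\<^sub>R x$i = (\<Sum>j\<in>UNIV. x$i - x$j)"
    using assms(1) by (simp add: sum_subtractf sum_constant_scaleR)
  then have "real CARD('n) * norm (x$i) = norm (\<Sum>j\<in>UNIV. x$i - x$j)"
    by (metis norm_scaleR abs_of_nat)
  also have "\<dots> \<le> (\<Sum>j\<in>UNIV. norm (x$i - x$j))" by (rule norm_sum)
  also have "\<dots> \<le> (\<Sum>j\<in>(UNIV::'n set). c)" by (intro sum_mono assms(2))
  finally show ?thesis by simp
qed

lemma zero_sum_norm_sq_le_edge_energy:
  fixes E :: "('n::finite \<times> 'n) set"
  assumes "\<And>i j. (i, j) \<in> E\<^sup>*"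
  obtains K where "0 < K"
    "\<And>x::real^'d^'n. (\<Sum>i\<in>UNIV. x$i) = 0 \<Longrightarrow> (norm x)\<^sup>2 \<le> K * edge_energy E x"
proof -
  obtain K where K: "0 \<le> K"
    and diff: "\<And>(x::real^'d^'n) i j. (norm (x$i - x$j))\<^sup>2 \<le> K * edge_energy E x"
    using connected_diff_sq_le_edge_energy[OF assms] by blast
  show ?thesis
  proof (rule that[of "real CARD('n) * K + 1"])
    show "0 < real CARD('n) * K + 1" using K by (simp add: add_nonneg_pos)
    fix x :: "real^'d^'n"
    assume "(\<Sum>i\<in>UNIV. x$i) = 0"
    then have "norm (x$i) \<le> sqrt (K * edge_energy E x)" for i
      by (rule norm_nth_le_of_sum_eq_0) (rule real_le_rsqrt[OF diff])
    then have "(norm (x$i))\<^sup>2 \<le> K * edge_energy E x" for i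
      by (metis K edge_energy_nonneg norm_ge_zero power_mono real_sqrt_pow2 zero_le_mult_iff)
    then have "(\<Sum>i\<in>UNIV. (norm (x$i))\<^sup>2) \<le> (\<Sum>i\<in>(UNIV::'n set). K * edge_energy E x)"
      by (rule sum_mono)
    then have "(norm x)\<^sup>2 \<le> real CARD('n) * K * edge_energy E x"
      unfolding norm_vec_def L2_set_def by (simp add: sum_nonneg)
    also have "\<dots> \<le> (real CARD('n) * K + 1) * edge_energy E x"
      using edge_energy_nonneg[of E x] by (simp add: algebra_simps)
    finally show "(norm x)\<^sup>2 \<le> (real CARD('n) * K + 1) * edge_energy E x" .
  qed
qed

lemma bearing_PE_formation_excites_zero_sum:
  fixes E :: "('n::finite \<times> 'n) set" and ps :: "real \<Rightarrow> real^'d::finite^'n"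
  assumes "sym E" "bearing_PE_formation E ps"
  obtains T A where "0 < T" "0 < A"
    "\<And>t x. 0 \<le> t \<Longrightarrow> (\<Sum>i\<in>UNIV. x$i) = 0 \<Longrightarrow>
       A * (norm x)\<^sup>2 \<le> integral {t..t+T} (\<lambda>\<tau>. x \<bullet> bearing_laplacian E (ps \<tau>) x)"
proof -
  obtain T \<mu> where T: "0 < T" and \<mu>: "0 < \<mu>" and PE: "\<And>t x. 0 \<le> t \<Longrightarrow>
      \<mu> * (x \<bullet> graph_laplacian E x) \<le> integral {t..t+T} (\<lambda>\<tau>. x \<bullet> bearing_laplacian E (ps \<tau>) x)"
    using assms(2) unfolding bearing_PE_formation_def bearing_laplacian_PE_def by blast
  obtain K where K: "0 < K"
    and conn: "\<And>x::real^'d^'n. (\<Sum>i\<in>UNIV. x$i) = 0 \<Longrightarrow> (norm x)\<^sup>2 \<le> K * edge_energy E x"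
    using zero_sum_norm_sq_le_edge_energy has_spanning_tree_imp_connected assms(2)
    unfolding bearing_PE_formation_def by blast
  show ?thesis
  proof (rule that[OF T, of "\<mu> / (2 * K)"])
    show "0 < \<mu> / (2 * K)" using \<mu> K by simp
    fix t :: real and x :: "real^'d^'n"
    assume "0 \<le> t" "(\<Sum>i\<in>UNIV. x$i) = 0"
    have "\<mu> / (2 * K) * (norm x)\<^sup>2 \<le> \<mu> / (2 * K) * (K * edge_energy E x)"
      using conn[OF \<open>(\<Sum>i\<in>UNIV. x$i) = 0\<close>] \<mu> K by (intro mult_left_mono) auto
    also have "\<dots> = \<mu> * (x \<bullet> graph_laplacian E x)"
      using K by (simp add: inner_graph_laplacian[OF assms(1)])
    finally show "\<mu> / (2 * K) * (norm x)\<^sup>2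
        \<le> integral {t..t+T} (\<lambda>\<tau>. x \<bullet> bearing_laplacian E (ps \<tau>) x)"
      using PE[OF \<open>0 \<le> t\<close>, of x] by linarith
  qed
qed

section \<open>Perturbation of bearings\<close>

lemma norm_nth_diff_le: "norm (x$i - x$j) \<le> 2 * norm (x :: 'a::real_normed_vector^'n::finite)"
  using norm_triangle_ineq4[of "x$i" "x$j"] Finite_Cartesian_Product.norm_nth_le[of x i]
    Finite_Cartesian_Product.norm_nth_le[of x j] by simp

lemma power2_le_three_sum_power2:
  fixes u a b c :: real
  assumes "0 \<le> u" "u \<le> a + b + c"
  shows "u\<^sup>2 \<le> 3 * (a\<^sup>2 + b\<^sup>2 + c\<^sup>2)"
proof -
  have "u\<^sup>2 \<le> (a + b + c)\<^sup>2" using assms by (simp add: power_mono)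
  also have "\<dots> \<le> 3 * (a\<^sup>2 + b\<^sup>2 + c\<^sup>2)"
    using zero_le_power2[of "a - b"] zero_le_power2[of "b - c"] zero_le_power2[of "a - c"]
    by (simp add: power2_eq_square algebra_simps)
  finally show ?thesis .
qed

lemma proj_perp_bearing_perturb_sq_le:
  fixes q s c e x :: "real^'d::finite^'n::finite"
  assumes "eps < norm (relpos q i j)" "0 < eps" and e: "e = q - s - c" and "c$i = c$j"
  shows "(norm (proj_perp (bearing s i j) (x$i - x$j)))\<^sup>2 \<le>
     3 * (norm (proj_perp (bearing q i j) (e$i - e$j)))\<^sup>2 + 12 * (norm (x - e))\<^sup>2
     + 768 * (norm e)\<^sup>2 * (norm x)\<^sup>2 / eps\<^sup>2"
proof -
  let ?g = "bearing q i j" and ?w = "bearing s i j"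
  have "relpos q i j - relpos s i j = e$j - e$i"
    using \<open>c$i = c$j\<close> by (simp add: e relpos_def algebra_simps)
  then have "norm (relpos q i j - relpos s i j) \<le> 2 * norm e"
    using norm_nth_diff_le[of e j i] by simp
  then have gw: "norm (?g - ?w) \<le> 2 * (2 * norm e) / eps"
    using norm_bearing_diff_le[OF assms(1,2), of s] assms(2)
    by (meson divide_right_mono mult_left_mono order_trans less_imp_le zero_le_numeral)
  have "norm (proj_perp ?w (x$i - x$j))
      \<le> norm (proj_perp ?g (e$i - e$j)) + norm ((x$i - x$j) - (e$i - e$j))
        + 2 * norm (?g - ?w) * norm (x$i - x$j)"
    by (rule norm_proj_perp_perturb_le[OF norm_bearing_le norm_bearing_le])
  also have "\<dots> \<le> norm (proj_perp ?g (e$i - e$j)) + 2 * norm (x - e)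
        + 2 * (2 * (2 * norm e) / eps) * (2 * norm x)"
    using gw norm_nth_diff_le[of "x - e" i j] norm_nth_diff_le[of x i j] assms(2)
    by (intro add_mono mult_mono order_refl) (auto simp: algebra_simps)
  finally have "(norm (proj_perp ?w (x$i - x$j)))\<^sup>2
      \<le> 3 * ((norm (proj_perp ?g (e$i - e$j)))\<^sup>2 + (2 * norm (x - e))\<^sup>2
        + (2 * (2 * (2 * norm e) / eps) * (2 * norm x))\<^sup>2)"
    by (intro power2_le_three_sum_power2) simp_all
  then show ?thesis by (simp add: power2_eq_square field_simps)
qed

lemma bearing_energy_perturb_le:
  fixes q s c e x :: "real^'d::finite^'n::finite"
  assumes "\<And>i j. (i, j) \<in> E \<Longrightarrow> eps < norm (relpos q i j)" "0 < eps"
    and "e = q - s - c" "\<And>i j. c$i = c$j"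
  shows "bearing_energy E s x \<le> 3 * bearing_energy E q e
     + real (card E) * (12 * (norm (x - e))\<^sup>2 + 768 * (norm e)\<^sup>2 * (norm x)\<^sup>2 / eps\<^sup>2)"
proof -
  have "(norm (proj_perp (bearing s i j) (x$i - x$j)))\<^sup>2
      \<le> 3 * (norm (proj_perp (bearing q i j) (e$i - e$j)))\<^sup>2
        + (12 * (norm (x - e))\<^sup>2 + 768 * (norm e)\<^sup>2 * (norm x)\<^sup>2 / eps\<^sup>2)" if "(i, j) \<in> E" for i j
    using proj_perp_bearing_perturb_sq_le[OF assms(1)[OF that] assms(2-4), of x] by linarith
  then have "bearing_energy E s x \<le> (\<Sum>(i, j)\<in>E. 3 * (norm (proj_perp (bearing q i j) (e$i - e$j)))\<^sup>2
      + (12 * (norm (x - e))\<^sup>2 + 768 * (norm e)\<^sup>2 * (norm x)\<^sup>2 / eps\<^sup>2))"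
    unfolding bearing_energy_def by (intro sum_mono) auto
  also have "\<dots> = 3 * bearing_energy E q e
      + real (card E) * (12 * (norm (x - e))\<^sup>2 + 768 * (norm e)\<^sup>2 * (norm x)\<^sup>2 / eps\<^sup>2)"
    by (simp add: bearing_energy_def sum.distrib sum_distrib_left case_prod_beta)
  finally show ?thesis .
qed


section \<open>The closed loop\<close>

lemma centroid_proj_nth_eq: "centroid_proj x $ i = centroid_proj x $ j"
  by (simp add: centroid_proj_def)

lemma sum_centroid_proj:
  "(\<Sum>i\<in>UNIV. centroid_proj x $ i) = (\<Sum>i\<in>UNIV. x $ i :: real^'d::finite)"
  unfolding centroid_proj_def vec_lambda_beta sum_constant_scaleR by simp

lemma control_law_minus_velocity:
  assumes "\<And>i j. c$i = c$j"
  shows "control_law E kp s v q - v = - kp *\<^sub>R bearing_laplacian E q (q - s - c)"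
proof -
  have "proj_perp (bearing q i j) (relpos s i j)
      = proj_perp (bearing q i j) ((q - s - c)$i - (q - s - c)$j)" for i j
  proof -
    have "(q - s - c)$i - (q - s - c)$j = relpos s i j - relpos q i j"
      using assms[of i j] by (simp add: relpos_def algebra_simps)
    then show ?thesis by (simp add: proj_perp_diff proj_perp_bearing_relpos)
  qed
  then show ?thesis by (simp add: vec_eq_iff control_law_def bearing_laplacian_def)
qed

lemma has_vector_derivative_inner_self:
  assumes "(f has_vector_derivative v) (at t within S)"
  shows "((\<lambda>x. f x \<bullet> f x) has_vector_derivative 2 * (f t \<bullet> v)) (at t within S)"
  using has_derivative_inner[OF assms[unfolded has_vector_derivative_def]
      assms[unfolded has_vector_derivative_def]]
  unfolding has_vector_derivative_def
  by (rule has_derivative_eq_rhs) (auto simp: inner_commute)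

lemma exp_bound_of_window_contraction:
  fixes V :: "real \<Rightarrow> real"
  assumes nonneg: "\<And>t. t0 \<le> t \<Longrightarrow> 0 \<le> V t"
    and antimono: "\<And>a b. t0 \<le> a \<Longrightarrow> a \<le> b \<Longrightarrow> V b \<le> V a"
    and contract: "\<And>t. t0 \<le> t \<Longrightarrow> V (t + T) \<le> (1 - \<eta>) * V t"
    and "0 < T" "0 < \<eta>" "\<eta> \<le> 1" "t0 \<le> t"
  shows "V t \<le> 3 * exp (- (\<eta> / T) * (t - t0)) * V t0"
proof -
  have iter: "V (t0 + real k * T) \<le> (1 - \<eta>) ^ k * V t0" for k
  proof (induction k)
    case (Suc k)
    have "V (t0 + real (Suc k) * T) \<le> (1 - \<eta>) * V (t0 + real k * T)"
      using contract[of "t0 + real k * T"] \<open>0 < T\<close> by (simp add: algebra_simps)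
    also have "\<dots> \<le> (1 - \<eta>) * ((1 - \<eta>) ^ k * V t0)"
      using Suc \<open>\<eta> \<le> 1\<close> by (intro mult_left_mono) auto
    finally show ?case by simp
  qed simp
  define k where "k = nat \<lfloor>(t - t0) / T\<rfloor>"
  have "real k = of_int \<lfloor>(t - t0) / T\<rfloor>"
    using assms(4,7) by (simp add: k_def)
  then have "real k \<le> (t - t0) / T" "(t - t0) / T < real k + 1"
    by linarith+
  then have k: "real k * T \<le> t - t0" "t - t0 < (real k + 1) * T"
    using \<open>0 < T\<close> by (simp_all add: pos_le_divide_eq pos_divide_less_eq)
  have "V t \<le> V (t0 + real k * T)"
    using k \<open>0 < T\<close> by (intro antimono) auto
  also have "\<dots> \<le> (1 - \<eta>) ^ k * V t0" by (rule iter)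
  also have "\<dots> \<le> exp (- \<eta>) ^ k * V t0"
    using exp_ge_add_one_self[of "- \<eta>"] nonneg[of t0] \<open>\<eta> \<le> 1\<close>
    by (intro mult_right_mono power_mono) auto
  also have "exp (- \<eta>) ^ k = exp \<eta> * exp (- (\<eta> / T) * ((real k + 1) * T))"
  proof -
    have "\<eta> + - (\<eta> / T) * ((real k + 1) * T) = real k * (- \<eta>)"
      using \<open>0 < T\<close> by (simp add: field_simps)
    then show ?thesis by (simp only: exp_add[symmetric] exp_of_nat_mult)
  qed
  also have "\<dots> \<le> 3 * exp (- (\<eta> / T) * (t - t0))"
  proof (intro mult_mono)
    show "exp \<eta> \<le> 3"
      using exp_le \<open>\<eta> \<le> 1\<close> by (meson exp_le_cancel_iff order_trans)
    have "\<eta> / T * (t - t0) \<le> \<eta> / T * ((real k + 1) * T)"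
      using k(2) \<open>0 < T\<close> \<open>0 < \<eta>\<close> by (intro mult_left_mono) auto
    then show "exp (- (\<eta> / T) * ((real k + 1) * T)) \<le> exp (- (\<eta> / T) * (t - t0))"
      by simp
  qed auto
  finally show ?thesis using nonneg[of t0] by (simp add: mult_right_mono)
qed

locale bearing_closed_loop =
  fixes E :: "('n::finite \<times> 'n) set" and kp eps t0 :: real
    and ps vs p :: "real \<Rightarrow> real^'d::finite^'n"
  assumes sym_E: "sym E" and kp_pos: "0 < kp" and eps_pos: "0 < eps" and t0_nonneg: "0 \<le> t0"
    and ps_deriv: "\<And>t. 0 \<le> t \<Longrightarrow> (ps has_vector_derivative vs t) (at t within {0..})"
    and solution: "closed_loop_solution E kp ps vs eps t0 p"
begin

definition error :: "real \<Rightarrow> real^'d^'n" where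
  "error t = p t - ps t - centroid_proj (p t0 - ps t0)"

definition lyapunov :: "real \<Rightarrow> real" where
  "lyapunov t = (norm (error t))\<^sup>2"

lemma relpos_gt_eps: "t0 \<le> t \<Longrightarrow> (i, j) \<in> E \<Longrightarrow> eps < norm (relpos (p t) i j)"
  using solution unfolding closed_loop_solution_def by blast

lemma error_has_derivative:
  assumes "t0 \<le> t"
  shows "(error has_vector_derivative - kp *\<^sub>R bearing_laplacian E (p t) (error t)) (at t within {t0..})"
proof -
  have "(p has_vector_derivative control_law E kp (ps t) (vs t) (p t)) (at t within {t0..})"
    using solution assms unfolding closed_loop_solution_def by blast
  moreover have "(ps has_vector_derivative vs t) (at t within {t0..})"
    using ps_deriv[of t] assms t0_nonneg by (auto intro: has_vector_derivative_within_subset)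
  ultimately have "(error has_vector_derivative control_law E kp (ps t) (vs t) (p t) - vs t - 0)
      (at t within {t0..})"
    unfolding error_def[abs_def] by (intro has_vector_derivative_diff has_vector_derivative_const)
  moreover have "control_law E kp (ps t) (vs t) (p t) - vs t = - kp *\<^sub>R bearing_laplacian E (p t) (error t)"
    unfolding error_def by (rule control_law_minus_velocity[OF centroid_proj_nth_eq])
  ultimately show ?thesis by simp
qed

lemma lyapunov_has_derivative:
  assumes "t0 \<le> t"
  shows "(lyapunov has_vector_derivative - kp * bearing_energy E (p t) (error t)) (at t within {t0..})"
  using has_vector_derivative_inner_self[OF error_has_derivative[OF assms]]
  by (simp add: lyapunov_def[abs_def] power2_norm_eq_inner inner_bearing_laplacian[OF sym_E])

lemma lyapunov_has_integral:
  assumes "t0 \<le> a" "a \<le> b"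
  shows "((\<lambda>\<tau>. kp * bearing_energy E (p \<tau>) (error \<tau>)) has_integral lyapunov a - lyapunov b) {a..b}"
proof -
  have "((\<lambda>\<tau>. - kp * bearing_energy E (p \<tau>) (error \<tau>)) has_integral lyapunov b - lyapunov a) {a..b}"
    using assms
    by (intro fundamental_theorem_of_calculus has_vector_derivative_within_subset[OF lyapunov_has_derivative])
       auto
  from has_integral_neg[OF this] show ?thesis by simp
qed

lemma error_has_integral:
  assumes "t0 \<le> a" "a \<le> b"
  shows "((\<lambda>\<tau>. - kp *\<^sub>R bearing_laplacian E (p \<tau>) (error \<tau>)) has_integral error b - error a) {a..b}"
  using assms
  by (intro fundamental_theorem_of_calculus has_vector_derivative_within_subset[OF error_has_derivative])
     auto

lemma lyapunov_antimono:
  assumes "t0 \<le> a" "a \<le> b"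
  shows "lyapunov b \<le> lyapunov a"
proof -
  have "0 \<le> lyapunov a - lyapunov b"
    by (rule has_integral_nonneg[OF lyapunov_has_integral[OF assms]])
       (auto intro!: mult_nonneg_nonneg bearing_energy_nonneg simp: less_imp_le[OF kp_pos])
  then show ?thesis by simp
qed

lemma norm_error_antimono:
  assumes "t0 \<le> a" "a \<le> b"
  shows "norm (error b) \<le> norm (error a)"
  using lyapunov_antimono[OF assms] unfolding lyapunov_def by (rule power2_le_imp_le) simp

lemma sum_error_eq_0:
  assumes "t0 \<le> t"
  shows "(\<Sum>i\<in>UNIV. error t $ i) = 0"
proof -
  define h where "h x = (\<Sum>i\<in>UNIV. x $ i)" for x :: "real^'d^'n"
  have h: "bounded_linear h" unfolding h_def by (intro bounded_linear_sum) auto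
  have "h \<circ> (\<lambda>\<tau>. - kp *\<^sub>R bearing_laplacian E (p \<tau>) (error \<tau>)) = (\<lambda>\<tau>. 0)"
    by (simp add: o_def h_def sum_negf scaleR_sum_right[symmetric] sum_bearing_laplacian_eq_0[OF sym_E])
  then have "((\<lambda>\<tau>. 0) has_integral h (error t - error t0)) {t0..t}"
    using has_integral_linear[OF error_has_integral[OF order_refl assms] h] by simp
  then have "h (error t - error t0) = 0"
    by (metis has_integral_0 has_integral_unique)
  then have "h (error t) = h (error t0)"
    using linear_diff[OF bounded_linear.linear[OF h]] by simp
  also have "h (error t0) = 0"
    by (simp add: h_def error_def sum_subtractf sum_centroid_proj)
  finally show ?thesis by (simp add: h_def)
qed

lemma norm_error_diff_le:
  assumes "t0 \<le> a" "a \<le> b" "0 < \<beta>"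
  shows "norm (error b - error a)
    \<le> (lyapunov a - lyapunov b) / (2 * \<beta>) + (b - a) * (kp * real (card E) * \<beta> / 2)"
proof -
  define g where
    "g \<tau> = kp * bearing_energy E (p \<tau>) (error \<tau>) / (2 * \<beta>) + kp * real (card E) * \<beta> / 2" for \<tau>
  have "((\<lambda>_. kp * real (card E) * \<beta> / 2) has_integral (b - a) * (kp * real (card E) * \<beta> / 2)) {a..b}"
    using has_integral_const_real[of "kp * real (card E) * \<beta> / 2" a b] assms(2) by (simp add: content_real)
  then have g: "(g has_integral (lyapunov a - lyapunov b) / (2 * \<beta>) + (b - a) * (kp * real (card E) * \<beta> / 2))
      {a..b}"
    unfolding g_def by (intro has_integral_add has_integral_divide lyapunov_has_integral assms(1,2))
  have bound: "norm (- kp *\<^sub>R bearing_laplacian E (p \<tau>) (error \<tau>)) \<le> g \<tau>" for \<tau>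
  proof -
    have "norm (- kp *\<^sub>R bearing_laplacian E (p \<tau>) (error \<tau>))
        = kp * norm (bearing_laplacian E (p \<tau>) (error \<tau>))"
      using kp_pos by simp
    also have "\<dots> \<le> kp * (bearing_energy E (p \<tau>) (error \<tau>) / (2 * \<beta>) + real (card E) * \<beta> / 2)"
      using kp_pos by (intro mult_left_mono norm_bearing_laplacian_le_energy assms(3)) simp
    also have "\<dots> = g \<tau>" by (simp add: g_def distrib_left mult.assoc)
    finally show ?thesis .
  qed
  then have "norm (integral {a..b} (\<lambda>\<tau>. - kp *\<^sub>R bearing_laplacian E (p \<tau>) (error \<tau>)))
      \<le> integral {a..b} g"
    by (intro integral_norm_bound_integral has_integral_integrable[OF g]
        has_integral_integrable[OF error_has_integral[OF assms(1,2)]])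
  then show ?thesis
    by (simp only: integral_unique[OF error_has_integral[OF assms(1,2)]] integral_unique[OF g])
qed

lemma error_stays_close:
  assumes "t0 \<le> t" "s \<in> {t..t+T}" "0 < T" "0 < \<theta>" "0 < M" "real (card E) \<le> M"
    and gain: "\<eta> * kp * M * T \<le> \<theta>\<^sup>2"
    and drop: "lyapunov t - lyapunov (t + T) \<le> \<eta> * (norm (error t))\<^sup>2"
  shows "norm (error s - error t) \<le> \<theta> * norm (error t)"
proof (cases "error t = 0")
  case True
  then show ?thesis using norm_error_antimono[of t s] assms(1,2) by simp
next
  case False
  \<comment> \<open>\<beta> makes both terms of norm_error_diff_le at most \<theta> |e(t)| / 2.\<close>
  define \<beta> where "\<beta> = \<theta> * norm (error t) / (kp * M * T)"
  have \<beta>: "0 < \<beta>" using False assms(3-5) kp_pos by (simp add: \<beta>_def)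
  have "lyapunov t - lyapunov s \<le> \<eta> * (norm (error t))\<^sup>2"
    using drop lyapunov_antimono[of s "t + T"] assms(1,2) by auto
  then have "(lyapunov t - lyapunov s) / (2 * \<beta>) \<le> \<eta> * (norm (error t))\<^sup>2 / (2 * \<beta>)"
    using \<beta> by (simp add: divide_right_mono)
  also have "\<dots> = \<eta> * kp * M * T / \<theta>\<^sup>2 * (\<theta> * norm (error t)) / 2"
    using False assms(3-5) kp_pos by (simp add: \<beta>_def field_simps power2_eq_square)
  also have "\<dots> \<le> \<theta> * norm (error t) / 2"
    using gain assms(4) False
    by (intro divide_right_mono mult_right_mono) (simp_all add: pos_divide_le_eq)
  finally have "(lyapunov t - lyapunov s) / (2 * \<beta>) \<le> \<theta> * norm (error t) / 2" .
  moreover have "(s - t) * (kp * real (card E) * \<beta> / 2) \<le> T * (kp * M * \<beta> / 2)"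
    using assms(2,6) kp_pos \<beta> by (intro mult_mono) (auto intro!: mult_right_mono)
  moreover have "T * (kp * M * \<beta> / 2) = \<theta> * norm (error t) / 2"
    using assms(3,5) kp_pos by (simp add: \<beta>_def)
  moreover have "t \<le> s" using assms(2) by simp
  ultimately show ?thesis
    using norm_error_diff_le[OF assms(1) _ \<beta>, of s] by linarith
qed

lemma inner_bearing_laplacian_desired_le:
  assumes "t0 \<le> s" "norm (error s - x) \<le> \<theta> * norm x" "norm (error s) \<le> r" "real (card E) \<le> M"
  shows "x \<bullet> bearing_laplacian E (ps s) x
    \<le> 3 / 2 * bearing_energy E (p s) (error s) + M * (12 * \<theta>\<^sup>2 + 768 * r\<^sup>2 / eps\<^sup>2) * (norm x)\<^sup>2 / 2"
proof -
  have "12 * (norm (x - error s))\<^sup>2 + 768 * (norm (error s))\<^sup>2 * (norm x)\<^sup>2 / eps\<^sup>2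
      \<le> 12 * (\<theta> * norm x)\<^sup>2 + 768 * r\<^sup>2 * (norm x)\<^sup>2 / eps\<^sup>2"
    using assms(2,3) by (intro add_mono mult_left_mono divide_right_mono mult_right_mono power_mono)
      (auto simp: norm_minus_commute)
  also have "\<dots> = (12 * \<theta>\<^sup>2 + 768 * r\<^sup>2 / eps\<^sup>2) * (norm x)\<^sup>2"
    by (simp add: algebra_simps power_mult_distrib)
  finally have "real (card E) * (12 * (norm (x - error s))\<^sup>2 + 768 * (norm (error s))\<^sup>2 * (norm x)\<^sup>2 / eps\<^sup>2)
      \<le> M * ((12 * \<theta>\<^sup>2 + 768 * r\<^sup>2 / eps\<^sup>2) * (norm x)\<^sup>2)"
    using assms(4) by (intro mult_mono) auto
  moreover have "bearing_energy E (ps s) x \<le> 3 * bearing_energy E (p s) (error s)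
      + real (card E) * (12 * (norm (x - error s))\<^sup>2 + 768 * (norm (error s))\<^sup>2 * (norm x)\<^sup>2 / eps\<^sup>2)"
    by (rule bearing_energy_perturb_le[OF relpos_gt_eps[OF assms(1)] eps_pos error_def centroid_proj_nth_eq])
  ultimately show ?thesis
    unfolding inner_bearing_laplacian[OF sym_E] by (simp add: mult.assoc)
qed

lemma lyapunov_window_contraction:
  assumes excite: "\<And>t x. 0 \<le> t \<Longrightarrow> (\<Sum>i\<in>UNIV. x$i) = 0 \<Longrightarrow>
      A * (norm x)\<^sup>2 \<le> integral {t..t+T} (\<lambda>\<tau>. x \<bullet> bearing_laplacian E (ps \<tau>) x)"
    and "0 < T" "0 < M" "real (card E) \<le> M" "0 < \<eta>" "0 < \<theta>"
    and gain_close: "\<eta> * kp * M * T \<le> \<theta>\<^sup>2"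
    and gain_excite: "3 * \<eta> / kp + T * M * (12 * \<theta>\<^sup>2 + 768 * r\<^sup>2 / eps\<^sup>2) \<le> 2 * A"
    and small: "norm (error t0) < r" and "t0 \<le> t"
  shows "lyapunov (t + T) \<le> (1 - \<eta>) * lyapunov t"
proof (rule ccontr)
  define x where "x = error t"
  define C where "C = M * (12 * \<theta>\<^sup>2 + 768 * r\<^sup>2 / eps\<^sup>2) * (norm x)\<^sup>2"
  assume "\<not> ?thesis"
  then have drop: "lyapunov t - lyapunov (t + T) < \<eta> * (norm x)\<^sup>2"
    by (simp add: lyapunov_def x_def algebra_simps)
  have "0 < (norm x)\<^sup>2"
    using drop lyapunov_antimono[of t "t + T"] \<open>t0 \<le> t\<close> \<open>0 < T\<close> \<open>0 < \<eta>\<close>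
    by (smt (verit) mult_le_0_iff zero_le_power2)
  have pointwise: "x \<bullet> bearing_laplacian E (ps s) x \<le> 3 / 2 * bearing_energy E (p s) (error s) + C / 2"
    if s: "s \<in> {t..t+T}" for s
  proof -
    have "norm (error s - x) \<le> \<theta> * norm x"
      unfolding x_def using drop assms(2-4,6) gain_close \<open>t0 \<le> t\<close> s
      by (intro error_stays_close) (auto simp: x_def)
    moreover have "norm (error s) \<le> r"
      using norm_error_antimono[of t0 s] small s \<open>t0 \<le> t\<close> by simp
    ultimately show ?thesis
      using inner_bearing_laplacian_desired_le[of s x \<theta> r M] s \<open>t0 \<le> t\<close> assms(4)
      by (simp add: C_def)
  qed
  have "((\<lambda>\<tau>. 3 / (2 * kp) * (kp * bearing_energy E (p \<tau>) (error \<tau>)))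
      has_integral 3 / (2 * kp) * (lyapunov t - lyapunov (t + T))) {t..t+T}"
    by (rule has_integral_mult_right[OF lyapunov_has_integral]) (use \<open>t0 \<le> t\<close> \<open>0 < T\<close> in auto)
  moreover have "(\<lambda>\<tau>. 3 / (2 * kp) * (kp * bearing_energy E (p \<tau>) (error \<tau>)))
      = (\<lambda>\<tau>. 3 / 2 * bearing_energy E (p \<tau>) (error \<tau>))"
    using kp_pos by auto
  moreover have "((\<lambda>\<tau>. C / 2) has_integral T * (C / 2)) {t..t+T}"
    using has_integral_const_real[of "C / 2" t "t + T"] \<open>0 < T\<close> by (simp add: content_real)
  ultimately have dissipated: "((\<lambda>\<tau>. 3 / 2 * bearing_energy E (p \<tau>) (error \<tau>) + C / 2)
      has_integral 3 / (2 * kp) * (lyapunov t - lyapunov (t + T)) + T * (C / 2)) {t..t+T}"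
    by (intro has_integral_add) simp_all
  have "0 < A"
  proof -
    have "0 \<le> T * M * (12 * \<theta>\<^sup>2 + 768 * r\<^sup>2 / eps\<^sup>2)"
      using assms(2,3) by (intro mult_nonneg_nonneg add_nonneg_nonneg) auto
    then show ?thesis using gain_excite kp_pos \<open>0 < \<eta>\<close> by (smt (verit) divide_pos_pos)
  qed
  have excited: "A * (norm x)\<^sup>2 \<le> integral {t..t+T} (\<lambda>\<tau>. x \<bullet> bearing_laplacian E (ps \<tau>) x)"
    using excite t0_nonneg \<open>t0 \<le> t\<close> sum_error_eq_0 by (simp add: x_def)
  have integrable: "(\<lambda>\<tau>. x \<bullet> bearing_laplacian E (ps \<tau>) x) integrable_on {t..t+T}"
  proof (rule ccontr)
    assume "\<not> ?thesis"
    then show False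
      using not_integrable_integral excited \<open>0 < A\<close> \<open>0 < (norm x)\<^sup>2\<close>
      by (metis mult_pos_pos not_le)
  qed
  have "integral {t..t+T} (\<lambda>\<tau>. x \<bullet> bearing_laplacian E (ps \<tau>) x)
      \<le> 3 / (2 * kp) * (lyapunov t - lyapunov (t + T)) + T * (C / 2)"
    by (rule has_integral_le[OF integrable_integral[OF integrable] dissipated]) (rule pointwise)
  also have "\<dots> < 3 / (2 * kp) * (\<eta> * (norm x)\<^sup>2) + T * (C / 2)"
    using drop kp_pos by (intro add_strict_right_mono mult_strict_left_mono) auto
  also have "\<dots> = (3 * \<eta> / kp + T * M * (12 * \<theta>\<^sup>2 + 768 * r\<^sup>2 / eps\<^sup>2)) * (norm x)\<^sup>2 / 2"
    by (simp add: C_def field_simps)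
  also have "\<dots> \<le> 2 * A * (norm x)\<^sup>2 / 2"
    using gain_excite by (intro divide_right_mono mult_right_mono) auto
  finally show False using excited by simp
qed

lemma norm_error_exp_decay:
  assumes contract: "\<And>s. t0 \<le> s \<Longrightarrow> lyapunov (s + T) \<le> (1 - \<eta>) * lyapunov s"
    and "0 < T" "0 < \<eta>" "\<eta> \<le> 1" "t0 \<le> t"
  shows "norm (error t) \<le> 2 * norm (error t0) * exp (- (\<eta> / (2 * T)) * (t - t0))"
proof (rule power2_le_imp_le)
  have "(norm (error t))\<^sup>2 \<le> 3 * exp (- (\<eta> / T) * (t - t0)) * (norm (error t0))\<^sup>2"
    using exp_bound_of_window_contraction[of t0 lyapunov T \<eta> t] lyapunov_antimono contract assms(2-5)
    by (simp add: lyapunov_def)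
  also have "\<dots> \<le> 4 * exp (- (\<eta> / T) * (t - t0)) * (norm (error t0))\<^sup>2"
    by (intro mult_right_mono) auto
  also have "4 * exp (- (\<eta> / T) * (t - t0)) = (2 * exp (- (\<eta> / (2 * T)) * (t - t0)))\<^sup>2"
    using \<open>0 < T\<close> by (simp add: power_mult_distrib exp_double[symmetric] field_simps)
  finally show "(norm (error t))\<^sup>2 \<le> (2 * norm (error t0) * exp (- (\<eta> / (2 * T)) * (t - t0)))\<^sup>2"
    by (simp add: power_mult_distrib mult_ac)
qed simp

end

lemma window_gains_exist:
  fixes kp eps T A M :: real
  assumes "0 < kp" "0 < eps" "0 < T" "0 < A" "0 < M"
  obtains \<eta> \<theta> r where "0 < \<eta>" "\<eta> \<le> 1" "0 < \<theta>" "0 < r" "\<eta> * kp * M * T \<le> \<theta>\<^sup>2"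
    "3 * \<eta> / kp + T * M * (12 * \<theta>\<^sup>2 + 768 * r\<^sup>2 / eps\<^sup>2) \<le> 2 * A"
proof -
  define \<theta> where "\<theta> = min 1 (A / (24 * T * M))"
  define \<rho> where "\<rho> = min 1 (A / (1536 * T * M))"
  define \<eta> where "\<eta> = min 1 (min (\<theta>\<^sup>2 / (kp * M * T)) (kp * A / 3))"
  have \<theta>: "0 < \<theta>" "\<theta>\<^sup>2 \<le> A / (24 * T * M)"
    using assms by (auto simp: \<theta>_def power2_eq_square intro: order_trans[OF mult_left_le])
  have \<rho>: "0 < \<rho>" "\<rho>\<^sup>2 \<le> A / (1536 * T * M)"
    using assms by (auto simp: \<rho>_def power2_eq_square intro: order_trans[OF mult_left_le])
  have \<eta>: "0 < \<eta>" "\<eta> \<le> 1" "\<eta> \<le> \<theta>\<^sup>2 / (kp * M * T)" "\<eta> \<le> kp * A / 3"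
    using assms \<theta>(1) unfolding \<eta>_def by (simp, (meson min.cobounded1 min.cobounded2 order_trans)+)
  show ?thesis
  proof (rule that[OF \<eta>(1,2) \<theta>(1), of "eps * \<rho>"])
    show "0 < eps * \<rho>" using assms \<rho> by simp
    show "\<eta> * kp * M * T \<le> \<theta>\<^sup>2"
      using \<eta>(3) assms by (simp add: pos_le_divide_eq mult_ac)
    have "3 * \<eta> / kp \<le> A" using \<eta>(4) assms by (simp add: pos_divide_le_eq mult_ac)
    moreover have "T * M * (12 * \<theta>\<^sup>2) \<le> A / 2"
      using \<theta>(2) assms by (simp add: pos_le_divide_eq mult_ac)
    moreover have "T * M * (768 * (eps * \<rho>)\<^sup>2 / eps\<^sup>2) \<le> A / 2"
      using \<rho>(2) assms by (simp add: pos_le_divide_eq power_mult_distrib mult_ac)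
    ultimately show "3 * \<eta> / kp + T * M * (12 * \<theta>\<^sup>2 + 768 * (eps * \<rho>)\<^sup>2 / eps\<^sup>2) \<le> 2 * A"
      by (simp add: distrib_left)
  qed
qed

theorem theorem2:
  fixes E :: "('n::finite \<times> 'n) set"
    and ps vs :: "real \<Rightarrow> real^'d::finite^'n"
    and kp eps :: real
  assumes d2: "CARD('d) \<ge> 2"
    and n2: "CARD('n) \<ge> 2"
    and graph: "undirected_graph E"
    and tree: "has_spanning_tree E"
    and deriv_ps: "\<And>t. t \<ge> 0 \<Longrightarrow> (ps has_vector_derivative vs t) (at t within {0..})"
    and vs_bdd: "\<exists>B. \<forall>t\<ge>0. \<forall>i. norm (vs t $ i) \<le> B"
    and well_def: "\<And>t i j. t \<ge> 0 \<Longrightarrow> (i, j) \<in> E \<Longrightarrow> ps t $ i \<noteq> ps t $ j"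
    and PE: "bearing_PE_formation E ps"
    and eps: "eps > 0"
    and kp: "kp > 0"
  shows "error_equilibrium_exp_stable E kp ps vs eps"
proof -
  have sym_E: "sym E" using graph by (simp add: undirected_graph_def)
  obtain T A where T: "0 < T" and A: "0 < A" and excite: "\<And>t x. 0 \<le> t \<Longrightarrow> (\<Sum>i\<in>UNIV. x$i) = 0 \<Longrightarrow>
      A * (norm x)\<^sup>2 \<le> integral {t..t+T} (\<lambda>\<tau>. x \<bullet> bearing_laplacian E (ps \<tau>) x)"
    using bearing_PE_formation_excites_zero_sum[OF sym_E PE] by blast
  obtain \<eta> \<theta> r where \<eta>: "0 < \<eta>" "\<eta> \<le> 1" and \<theta>: "0 < \<theta>" and r: "0 < r"
    and gains: "\<eta> * kp * (real (card E) + 1) * T \<le> \<theta>\<^sup>2"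
      "3 * \<eta> / kp + T * (real (card E) + 1) * (12 * \<theta>\<^sup>2 + 768 * r\<^sup>2 / eps\<^sup>2) \<le> 2 * A"
    using window_gains_exist[OF kp eps T A, of "real (card E) + 1"] by auto
  show ?thesis
    unfolding error_equilibrium_exp_stable_def Let_def
  proof (rule exI[of _ 2], rule exI[of _ "\<eta> / (2 * T)"], rule exI[of _ r], intro conjI allI impI)
    show "(0::real) < 2" "0 < \<eta> / (2 * T)" "0 < r" using \<eta> T r by auto
    fix t0 t :: real and p :: "real \<Rightarrow> real^'d^'n"
    assume "0 \<le> t0" "closed_loop_solution E kp ps vs eps t0 p" "t0 \<le> t"
      and small: "norm (p t0 - ps t0 - centroid_proj (p t0 - ps t0)) < r"
    then interpret bearing_closed_loop E kp eps t0 ps vs p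
      using sym_E kp eps deriv_ps by unfold_locales
    have "norm (error t) \<le> 2 * norm (error t0) * exp (- (\<eta> / (2 * T)) * (t - t0))"
      using lyapunov_window_contraction[OF excite T _ _ \<eta>(1) \<theta> gains small[folded error_def]]
      by (intro norm_error_exp_decay T \<eta> \<open>t0 \<le> t\<close>) auto
    then show "norm (p t - ps t - centroid_proj (p t0 - ps t0))
        \<le> 2 * norm (p t0 - ps t0 - centroid_proj (p t0 - ps t0)) * exp (- (\<eta> / (2 * T)) * (t - t0))"
      by (simp add: error_def)
  qed
qed

end
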